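(* Let $f:[0,1]\to\mathbb{R}$ be a continuous function such that $f(0)=0$ and $f(1)=1$, and let $\gamma(t)=(t,f(t))$, $t\in[0,1]$. Then for each $n\in\mathbb{N}$ there exist points $A_0,A_1,\ldots,A_{n+1}$ on $\gamma$ such that $A_0=(0,0)$, $A_{n+1}=(1,1)$, all the numbers $\pi_1(\overrightarrow{A_iA_{i+1}})$ and $\pi_2(\overrightarrow{A_iA_{i+1}})$, $i=0,\ldots,n$, are strictly positive, and the two sequences $\big(\pi_1(\overrightarrow{A_iA_{i+1}})\big)_{i=0}^{n}$ and $\big(\pi_2(\overrightarrow{A_iA_{i+1}})\big)_{i=0}^{n}$ are the same after a rearrangement.
   Context: $\pi_1,\pi_2:\mathbb{R}^2\to\mathbb{R}$ denote the projections onto the $x$-axis and the $y$-axis, $\pi_1(a,b)=a$, $\pi_2(a,b)=b$. For points $A,B\in\mathbb{R}^2$, $\overrightarrow{AB}=B-A$. *)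

theory Defs
  imports "HOL-Analysis.Analysis" "HOL-Combinatorics.Permutations"
begin

end

theory Submission
  imports Defs
begin

text \<open>
  It suffices to find \<open>0 = x 0 < x 1 < \<dots> < x (n + 1) = 1\<close> and a height \<open>d\<close> with
  \<open>f (x (i + 1)) = x i + d\<close> for \<open>i \<le> n\<close>: for the points \<open>A i = (x i, f (x i))\<close> the rise
  of step \<open>i \<ge> 1\<close> is then the run of step \<open>i - 1\<close>, and the rise \<open>d\<close> of step 0 is the
  run \<open>1 - x n\<close> of the last step, so the rises are the runs shifted cyclically.

  Such a staircase is traced downwards from \<open>x (n + 1) = 1\<close> by \<open>u \<mapsto> f u - d\<close>. Capping
  this map by \<open>u\<close> (and clamping the argument of \<open>f\<close> to \<open>[0,1]\<close>) makes the orbit weakly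
  decreasing and continuous in \<open>d\<close>; the intermediate value theorem gives \<open>d\<close> whose
  \<open>(n + 1)\<close>-st iterate from 1 is 0. The orbit is then strictly decreasing, because a stall is
  a fixed point that persists up to step \<open>n + 1\<close>, hence equals 0, while 0 is sent to \<open>-d\<close>.
\<close>

lemma funpow_le_self:
  fixes g :: "'a::preorder \<Rightarrow> 'a"
  assumes "\<And>u. g u \<le> u"
  shows "(g ^^ k) u \<le> u"
  by (induction k) (auto intro: order_trans assms)

lemma funpow_antimono:
  fixes g :: "'a::preorder \<Rightarrow> 'a"
  assumes "\<And>u. g u \<le> u" and "k \<le> j"
  shows "(g ^^ j) u \<le> (g ^^ k) u"
proof -
  obtain m where "j = m + k" using assms(2) le_add_diff_inverse2 by metis
  then show ?thesis using funpow_le_self[OF assms(1)] by (simp add: funpow_add)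
qed

lemma funpow_stationary:
  assumes "g ((g ^^ k) u) = (g ^^ k) u" and "k \<le> j"
  shows "(g ^^ j) u = (g ^^ k) u"
proof -
  obtain m where "j = m + k" using assms(2) le_add_diff_inverse2 by metis
  moreover have "(g ^^ m) ((g ^^ k) u) = (g ^^ k) u" for m
    by (induction m) (simp_all add: assms(1))
  ultimately show ?thesis by (simp add: funpow_add)
qed

lemma cyclic_shift_permutes:
  fixes n :: nat
  shows "(\<lambda>i. if i = 0 then n else if i \<le> n then i - 1 else i) permutes {0..n}"
proof (rule bij_imp_permutes)
  show "bij_betw (\<lambda>i. if i = 0 then n else if i \<le> n then i - 1 else i) {0..n} {0..n}"
    by (rule bij_betw_byWitness[where f' = "\<lambda>i. if i = n then 0 else Suc i"]) auto
qed auto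

definition descend :: "(real \<Rightarrow> real) \<Rightarrow> real \<Rightarrow> real \<Rightarrow> real" where
  "descend f d u = min (f (max 0 (min 1 u)) - d) u"

lemma descend_le: "descend f d u \<le> u"
  by (simp add: descend_def)

lemma continuous_on_descend_orbit:
  assumes "continuous_on {0..1} f"
  shows "continuous_on UNIV (\<lambda>d. (descend f d ^^ k) u)"
proof (induction k)
  case 0
  then show ?case by simp
next
  case (Suc k)
  have "continuous_on UNIV (\<lambda>d. f (max 0 (min 1 ((descend f d ^^ k) u))))"
    by (rule continuous_on_compose2[OF assms]) (auto intro!: continuous_intros Suc)
  then have "continuous_on UNIV
      (\<lambda>d. min (f (max 0 (min 1 ((descend f d ^^ k) u))) - d) ((descend f d ^^ k) u))"
    by (intro continuous_intros Suc)
  moreover have "(descend f d ^^ Suc k) u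
      = min (f (max 0 (min 1 ((descend f d ^^ k) u))) - d) ((descend f d ^^ k) u)" for d
    by (simp add: descend_def)
  ultimately show ?case
    by simp
qed

lemma descend_root:
  assumes cont: "continuous_on {0..1} f" and f1: "f 1 = 1"
  obtains d where "0 < d" "(descend f d ^^ Suc n) 1 = 0"
proof -
  have at_0: "(descend f 0 ^^ k) 1 = 1" for k
    by (induction k) (simp_all add: descend_def f1)
  have "(descend f 1 ^^ Suc n) 1 = (descend f 1 ^^ n) (descend f 1 1)"
    unfolding funpow_Suc_right comp_def by (rule refl)
  also have "\<dots> \<le> descend f 1 1"
    by (rule funpow_le_self) (rule descend_le)
  also have "descend f 1 1 = 0"
    by (simp add: descend_def f1)
  finally have at_1: "(descend f 1 ^^ Suc n) 1 \<le> 0" .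
  have "continuous_on {0..1} (\<lambda>d. (descend f d ^^ Suc n) 1)"
    using continuous_on_descend_orbit[OF cont] by (rule continuous_on_subset) auto
  moreover have "0 \<le> (descend f 0 ^^ Suc n) 1"
    by (simp only: at_0 zero_le_one)
  ultimately obtain d where "0 \<le> d" and root: "(descend f d ^^ Suc n) 1 = 0"
    using IVT2'[of "\<lambda>d. (descend f d ^^ Suc n) 1" 1 0 0] at_1 by auto
  have "d \<noteq> 0"
    using at_0[of "Suc n"] root by (metis zero_neq_one)
  with \<open>0 \<le> d\<close> have "0 < d" by linarith
  from this root show thesis by (rule that)
qed

lemma descend_orbit_strict:
  assumes f0: "f 0 = 0" and "0 < d" and root: "(descend f d ^^ Suc n) 1 = 0" and "k \<le> n"
  shows "(descend f d ^^ Suc k) 1 < (descend f d ^^ k) 1"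
proof (rule ccontr)
  let ?w = "\<lambda>k. (descend f d ^^ k) 1"
  assume "\<not> ?w (Suc k) < ?w k"
  then have fixed: "descend f d (?w k) = ?w k"
    using descend_le[of f d "?w k"] by simp
  then have "?w k = 0"
    using funpow_stationary[of "descend f d" k 1 "Suc n"] root \<open>k \<le> n\<close> by simp
  with fixed have "descend f d 0 = 0" by simp
  moreover have "descend f d 0 = - d"
    using f0 \<open>0 < d\<close> by (simp add: descend_def)
  ultimately show False
    using \<open>0 < d\<close> by simp
qed

lemma staircase_exists:
  fixes f :: "real \<Rightarrow> real"
  assumes cont: "continuous_on {0..1} f" and f0: "f 0 = 0" and f1: "f 1 = 1"
  obtains x :: "nat \<Rightarrow> real" and d :: real
  where "x 0 = 0" "x (Suc n) = 1" "\<And>i. i \<le> n \<Longrightarrow> x i < x (Suc i)"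
    "\<And>i. i \<le> Suc n \<Longrightarrow> x i \<in> {0..1}" "\<And>i. i \<le> n \<Longrightarrow> f (x (Suc i)) = x i + d"
proof -
  obtain d where d: "0 < d" and root: "(descend f d ^^ Suc n) 1 = 0"
    using descend_root[OF cont f1] by blast
  define w where "w k = (descend f d ^^ k) 1" for k
  have w_Suc: "w (Suc k) = descend f d (w k)" for k
    by (simp add: w_def)
  have w_strict: "w (Suc k) < w k" if "k \<le> n" for k
    using descend_orbit_strict[OF f0 d root that] by (simp add: w_def)
  have w_end: "w (Suc n) = 0"
    unfolding w_def by (rule root)
  have w_range: "w k \<in> {0..1}" if "k \<le> Suc n" for k
  proof -
    have "w (Suc n) \<le> w k"
      unfolding w_def by (rule funpow_antimono[OF descend_le that])
    moreover have "w k \<le> 1"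
      unfolding w_def by (rule funpow_le_self[OF descend_le])
    ultimately show ?thesis
      using w_end by simp
  qed
  have w_step: "f (w k) = w (Suc k) + d" if "k \<le> n" for k
  proof -
    have "w (Suc k) = f (max 0 (min 1 (w k))) - d"
      using w_strict[OF that] by (auto simp: w_Suc descend_def min_def split: if_splits)
    moreover have "max 0 (min 1 (w k)) = w k"
      using w_range[of k] that by simp
    ultimately show ?thesis by simp
  qed
  show thesis
  proof (rule that[of "\<lambda>i. w (Suc n - i)" d])
    show "w (Suc n - 0) = 0" using w_end by simp
    show "w (Suc n - Suc n) = 1" by (simp add: w_def)
    show "w (Suc n - i) < w (Suc n - Suc i)" if "i \<le> n" for i
      using w_strict[of "n - i"] that by (simp add: Suc_diff_le)
    show "w (Suc n - i) \<in> {0..1}" if "i \<le> Suc n" for i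
      using w_range by simp
    show "f (w (Suc n - Suc i)) = w (Suc n - i) + d" if "i \<le> n" for i
      using w_step[of "n - i"] that by (simp add: Suc_diff_le)
  qed
qed

lemma staircase_rise_eq_shifted_run:
  fixes f :: "real \<Rightarrow> real" and x :: "nat \<Rightarrow> real"
  assumes f0: "f 0 = 0" and f1: "f 1 = 1" and x0: "x 0 = 0" and x1: "x (Suc n) = 1"
    and step: "\<And>i. i \<le> n \<Longrightarrow> f (x (Suc i)) = x i + d" and "i \<le> n"
  defines "j \<equiv> if i = 0 then n else i - 1"
  shows "f (x (Suc i)) - f (x i) = x (Suc j) - x j"
proof (cases i)
  case 0
  have "f (x (Suc n)) = x n + d"
    using step by simp
  then have "d = 1 - x n"
    using f1 x1 by simp
  then show ?thesis
    using step[of 0] 0 f0 x0 x1 by (simp add: j_def)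
next
  case (Suc k)
  then have "j = k"
    by (simp add: j_def)
  moreover have "f (x (Suc i)) = x i + d" "f (x i) = x k + d"
    using step \<open>i \<le> n\<close> Suc by simp_all
  ultimately show ?thesis
    using Suc by simp
qed

theorem corollary1:
  fixes f :: "real \<Rightarrow> real" and n :: nat
  assumes "continuous_on {0..1} f" and "f 0 = 0" and "f 1 = 1"
  shows "\<exists>A :: nat \<Rightarrow> real \<times> real.
           (\<forall>i\<le>n+1. \<exists>t\<in>{0..1}. A i = (t, f t))
         \<and> A 0 = (0, 0) \<and> A (n+1) = (1, 1)
         \<and> (\<forall>i\<le>n. fst (A (Suc i) - A i) > 0 \<and> snd (A (Suc i) - A i) > 0)
         \<and> (\<exists>\<sigma>. \<sigma> permutes {0..n} \<and>
              (\<forall>i\<le>n. snd (A (Suc i) - A i) = fst (A (Suc (\<sigma> i)) - A (\<sigma> i))))"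
proof -
  obtain x d where x0: "x 0 = 0" and x1: "x (Suc n) = 1" and incr: "\<And>i. i \<le> n \<Longrightarrow> x i < x (Suc i)"
    and range: "\<And>i. i \<le> Suc n \<Longrightarrow> x i \<in> {0..1}"
    and step: "\<And>i. i \<le> n \<Longrightarrow> f (x (Suc i)) = x i + d"
    using staircase_exists[OF assms, where n = n] by blast
  define A where "A i = (x i, f (x i))" for i
  define \<sigma> where "\<sigma> i = (if i = 0 then n else if i \<le> n then i - 1 else i)" for i
  have run: "fst (A (Suc i) - A i) = x (Suc i) - x i" for i
    by (simp add: A_def)
  have rise: "snd (A (Suc i) - A i) = f (x (Suc i)) - f (x i)" for i
    by (simp add: A_def)
  have \<sigma>_eq: "\<sigma> i = (if i = 0 then n else i - 1)" if "i \<le> n" for i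
    using that by (simp add: \<sigma>_def)
  have rise_eq: "snd (A (Suc i) - A i) = fst (A (Suc (\<sigma> i)) - A (\<sigma> i))" if "i \<le> n" for i
    unfolding run rise \<sigma>_eq[OF that]
    by (rule staircase_rise_eq_shifted_run[OF assms(2,3) x0 x1 step that])
  have run_pos: "fst (A (Suc i) - A i) > 0" if "i \<le> n" for i
    unfolding run using incr[OF that] by simp
  have "snd (A (Suc i) - A i) > 0" if "i \<le> n" for i
    unfolding rise_eq[OF that] using that by (intro run_pos) (auto simp: \<sigma>_eq)
  note pos = run_pos this
  show ?thesis
  proof (intro exI[of _ A] exI[of _ \<sigma>] conjI allI impI)
    show "\<exists>t\<in>{0..1}. A i = (t, f t)" if "i \<le> n + 1" for i
      using range[of i] that by (simp add: A_def)
    show "A 0 = (0, 0)" "A (n + 1) = (1, 1)"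
      using x0 x1 assms(2,3) by (simp_all add: A_def)
    show "\<sigma> permutes {0..n}"
      unfolding \<sigma>_def by (rule cyclic_shift_permutes)
  qed (use pos rise_eq in blast)+
qed

end
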